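(* Let $\rho_{AB}$ be any two-qubit state, let $A_1,A_2,A_3$ be dichotomic ($\pm1$-valued) observables on the first qubit and $B_1,B_2,B_3$ dichotomic observables on the second qubit, and set $F_3=\frac{1}{\sqrt3}\big|\sum_{i=1}^3\mathrm{Tr}(\rho_{AB}\,A_i\otimes B_i)\big|$. Then $F_3\le 1/\eta_{opt}$, where $\eta_{opt}$ is the optimal (largest) unsharpness parameter $\eta\in[0,1]$ such that, for any three dichotomic qubit observables, their unsharp versions with parameter $\eta$ are jointly measurable.
   Context: For a dichotomic observable $A=P_+-P_-$ (with $P_\pm$ its spectral projections), its unsharp version with unsharpness parameter $\eta\in[0,1]$ is the two-outcome POVM with elements $A^{(\eta)}_{\pm}=\eta P_\pm+(1-\eta)\frac{I}{2}$, whose associated observable is $\eta A$ (for traceless $A$). A set of POVMs is jointly measurable if there is a single POVM from whose outcomes all of them are obtained as marginals. *)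

theory Defs
  imports "HOL-Analysis.Analysis" "HOL-Library.Numeral_Type"
begin

text \<open>Operators on a finite-dimensional Hilbert space C^'n, as 'n x 'n complex matrices.
  A qubit is 'n = 2; a two-qubit system is indexed by 2 \<times> 2.\<close>

type_synonym 'n op = "complex ^ 'n ^ 'n"

definition hermitian :: "'n::finite op \<Rightarrow> bool" where
  "hermitian A \<longleftrightarrow> (\<forall>i j. A $ i $ j = cnj (A $ j $ i))"

definition psd :: "'n::finite op \<Rightarrow> bool" where
  "psd A \<longleftrightarrow> hermitian A \<and>
     (\<forall>x :: complex ^ 'n. 0 \<le> Re (\<Sum>i\<in>UNIV. \<Sum>j\<in>UNIV. cnj (x $ i) * A $ i $ j * x $ j))"

definition trace :: "'n::finite op \<Rightarrow> complex" where
  "trace A = (\<Sum>i\<in>UNIV. A $ i $ i)"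

definition density :: "'n::finite op \<Rightarrow> bool" where
  "density \<rho> \<longleftrightarrow> psd \<rho> \<and> trace \<rho> = 1"

definition kron :: "'m::finite op \<Rightarrow> 'n::finite op \<Rightarrow> ('m \<times> 'n) op" where
  "kron A B = (\<chi> p q. A $ fst p $ fst q * B $ snd p $ snd q)"

text \<open>Dichotomic (\<plusminus>1-valued) observable: Hermitian with spectrum in {1,-1}, i.e. A^2 = I.\<close>
definition dichotomic :: "'n::finite op \<Rightarrow> bool" where
  "dichotomic A \<longleftrightarrow> hermitian A \<and> A ** A = mat 1"

definition spec_proj :: "'n::finite op \<Rightarrow> bool \<Rightarrow> 'n op" where
  "spec_proj A b = (1/2::real) *\<^sub>R (mat 1 + (if b then (1::real) else -1) *\<^sub>R A)"

definition unsharp :: "real \<Rightarrow> 'n::finite op \<Rightarrow> bool \<Rightarrow> 'n op" where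
  "unsharp \<eta> A b = \<eta> *\<^sub>R spec_proj A b + ((1 - \<eta>) / 2) *\<^sub>R mat 1"

definition povm :: "('o::finite \<Rightarrow> 'n::finite op) \<Rightarrow> bool" where
  "povm E \<longleftrightarrow> (\<forall>k. psd (E k)) \<and> (\<Sum>k\<in>UNIV. E k) = mat 1"

definition jointly_measurable :: "('i::finite \<Rightarrow> 'o::finite \<Rightarrow> 'n::finite op) \<Rightarrow> bool" where
  "jointly_measurable M \<longleftrightarrow>
     (\<exists>G :: ('i \<Rightarrow> 'o) \<Rightarrow> 'n op. povm G \<and>
        (\<forall>i k. (\<Sum>f\<in>{f. f i = k}. G f) = M i k))"

definition eta_opt :: real where
  "eta_opt = Sup {\<eta> \<in> {0..1}. \<forall>A :: 3 \<Rightarrow> 2 op. (\<forall>i. dichotomic (A i)) \<longrightarrow>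
                      jointly_measurable (\<lambda>i. unsharp \<eta> (A i))}"

end

theory Submission
  imports Defs
begin

text \<open>Each \<open>Tr(\<rho> A\<^sub>i \<otimes> B\<^sub>i)\<close> is the expectation of the dichotomic observable \<open>A\<^sub>i \<otimes> B\<^sub>i\<close>, so it has
  modulus at most 1 and \<open>F\<^sub>3 \<le> \<surd>3\<close>; it remains to show \<open>0 < \<eta>\<^sub>o\<^sub>p\<^sub>t \<le> 1/\<surd>3\<close>.
  If \<open>G\<close> jointly measures the unsharp Pauli observables, its outcomes are sign vectors \<open>f\<close> and
  \<open>\<Sum>\<^sub>f f\<^sub>i G\<^sub>f = \<eta> \<sigma>\<^sub>i\<close>. Pairing with \<open>\<sigma>\<^sub>i\<close> and summing over \<open>i\<close> gives
  \<open>6\<eta> = \<Sum>\<^sub>f Tr(G\<^sub>f S\<^sub>f)\<close> with \<open>S\<^sub>f = \<Sum>\<^sub>i f\<^sub>i \<sigma>\<^sub>i\<close>; since \<open>S\<^sub>f\<^sup>2 = 3\<close>, the operator \<open>\<surd>3 - S\<^sub>f\<close> is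
  positive, so \<open>Tr(G\<^sub>f S\<^sub>f) \<le> \<surd>3 Tr G\<^sub>f\<close> and \<open>6\<eta> \<le> 2\<surd>3\<close>. On the other hand, measuring one of
  \<open>n\<close> observables chosen uniformly at random and reporting fair coin flips for the others
  jointly realises all of them with unsharpness \<open>1/n\<close>.\<close>

subsection \<open>Positive semidefinite matrices\<close>

definition qform :: "'n::finite op \<Rightarrow> complex ^ 'n \<Rightarrow> complex" where
  "qform A x = (\<Sum>i\<in>UNIV. \<Sum>j\<in>UNIV. cnj (x $ i) * A $ i $ j * x $ j)"

lemma psd_iff_qform: "psd A \<longleftrightarrow> hermitian A \<and> (\<forall>x. 0 \<le> Re (qform A x))"
  by (simp add: psd_def qform_def)

text \<open>Unlike \<open>hermitian_def\<close>, whose equation \<open>A $ i $ j = cnj (A $ j $ i)\<close> loops when used as a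
  rewrite rule, this form is safe for the simplifier.\<close>

lemma hermitian_iff_cnj: "hermitian A \<longleftrightarrow> (\<forall>i j. cnj (A $ i $ j) = A $ j $ i)"
  unfolding hermitian_def by metis

lemma hermitian_cnj: "hermitian A \<Longrightarrow> cnj (A $ i $ j) = A $ j $ i"
  by (simp add: hermitian_iff_cnj)

lemma hermitian_mat_1: "hermitian (mat 1)"
  by (simp add: hermitian_iff_cnj mat_def)

lemma hermitian_add: "hermitian A \<Longrightarrow> hermitian B \<Longrightarrow> hermitian (A + B)"
  by (simp add: hermitian_iff_cnj)

lemma hermitian_diff: "hermitian A \<Longrightarrow> hermitian B \<Longrightarrow> hermitian (A - B)"
  by (simp add: hermitian_iff_cnj)

lemma hermitian_scaleR: "hermitian A \<Longrightarrow> hermitian (c *\<^sub>R A)"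
  by (simp add: hermitian_iff_cnj)

lemma hermitian_sum: "(\<And>k. k \<in> S \<Longrightarrow> hermitian (A k)) \<Longrightarrow> hermitian (\<Sum>k\<in>S. A k)"
  by (simp add: hermitian_iff_cnj)

lemma qform_add: "qform (A + B) x = qform A x + qform B x"
  by (simp add: qform_def algebra_simps sum.distrib)

lemma qform_scaleR: "qform (c *\<^sub>R A) x = of_real c * qform A x"
  by (simp add: qform_def sum_distrib_left mult_ac flip: scaleR_conv_of_real)

lemma psd_0: "psd 0"
  by (simp add: psd_iff_qform hermitian_iff_cnj qform_def)

lemma psd_add: "psd A \<Longrightarrow> psd B \<Longrightarrow> psd (A + B)"
  by (simp add: psd_iff_qform hermitian_add qform_add)

lemma psd_scaleR: "psd A \<Longrightarrow> 0 \<le> c \<Longrightarrow> psd (c *\<^sub>R A)"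
  by (simp add: psd_iff_qform hermitian_scaleR qform_scaleR)

lemma psd_sum: "(\<And>k. k \<in> S \<Longrightarrow> psd (A k)) \<Longrightarrow> psd (\<Sum>k\<in>S. A k)"
  by (induction S rule: infinite_finite_induct) (auto intro: psd_add psd_0)

lemma qform_square:
  assumes "hermitian M"
  shows "qform (M ** M) x = (\<Sum>k\<in>UNIV. cnj ((M *v x) $ k) * (M *v x) $ k)"
proof -
  have "qform (M ** M) x = (\<Sum>i\<in>UNIV. \<Sum>j\<in>UNIV. \<Sum>k\<in>UNIV. cnj (x $ i) * M $ i $ k * M $ k $ j * x $ j)"
    by (simp add: qform_def matrix_matrix_mult_def sum_distrib_left sum_distrib_right mult.assoc)
  also have "\<dots> = (\<Sum>k\<in>UNIV. \<Sum>i\<in>UNIV. \<Sum>j\<in>UNIV. cnj (x $ i) * M $ i $ k * M $ k $ j * x $ j)"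
    by (subst sum.swap, rule sum.cong[OF refl], rule sum.swap)
  also have "\<dots> = (\<Sum>k\<in>UNIV. \<Sum>i\<in>UNIV. \<Sum>j\<in>UNIV. cnj (M $ k $ i * x $ i) * (M $ k $ j * x $ j))"
    by (simp add: hermitian_cnj[OF assms] mult.assoc mult.left_commute)
  also have "\<dots> = (\<Sum>k\<in>UNIV. cnj ((M *v x) $ k) * (M *v x) $ k)"
    by (simp add: matrix_vector_mult_def sum_product)
  finally show ?thesis .
qed

lemma Re_qform_square_nonneg: "hermitian M \<Longrightarrow> 0 \<le> Re (qform (M ** M) x)"
  by (simp add: qform_square sum_nonneg mult.commute[of "cnj _"] complex_mult_cnj)

lemma psd_if_square_eq_scaleR:
  assumes "hermitian M" and "M ** M = c *\<^sub>R M" and "0 < c"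
  shows "psd M"
proof -
  have "0 \<le> c * Re (qform M x)" for x
    using Re_qform_square_nonneg[OF assms(1), of x] by (simp add: assms(2) qform_scaleR)
  then show ?thesis
    using assms(1,3) by (simp add: psd_iff_qform zero_le_mult_iff)
qed

lemma matrix_diff_ldistrib: "A ** (B - C) = A ** B - A ** (C :: 'a::ring_1 ^ 'n ^ 'm)"
  by (vector matrix_matrix_mult_def sum_subtractf[symmetric] field_simps)

lemma matrix_diff_rdistrib: "(B - C) ** A = B ** A - C ** (A :: 'a::ring_1 ^ 'n ^ 'm)"
  by (vector matrix_matrix_mult_def sum_subtractf[symmetric] field_simps)

lemma matrix_sum_ldistrib: "A ** (\<Sum>k\<in>S. B k) = (\<Sum>k\<in>S. A ** B k)"
  by (induction S rule: infinite_finite_induct) (simp_all add: matrix_add_ldistrib)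

lemma matrix_add_rdistrib: "(B + C) ** A = B ** A + C ** (A :: 'a::semiring_1 ^ 'n ^ 'm)"
  by (vector matrix_matrix_mult_def sum.distrib[symmetric] field_simps)

lemma matrix_sum_rdistrib: "(\<Sum>k\<in>S. B k) ** A = (\<Sum>k\<in>S. B k ** A)"
  by (induction S rule: infinite_finite_induct) (simp_all add: matrix_add_rdistrib)

lemma trace_diff: "trace (A - B) = trace A - trace B"
  by (simp add: trace_def sum_subtractf)

lemma trace_scaleR: "trace (c *\<^sub>R A) = of_real c * trace A"
  by (simp add: trace_def scaleR_sum_right flip: scaleR_conv_of_real)

lemma trace_sum: "trace (\<Sum>k\<in>S. A k) = (\<Sum>k\<in>S. trace (A k))"
  unfolding trace_def sum_component by (rule sum.swap)

lemma trace_mat_1: "trace (mat 1 :: 'n::finite op) = of_nat CARD('n)"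
  by (simp add: trace_def mat_def)

lemma trace_mult_square_eq:
  assumes "hermitian M"
  shows "trace (P ** (M ** M)) = (\<Sum>k\<in>UNIV. qform P (column k M))"
proof -
  have "trace (P ** (M ** M)) = (\<Sum>i\<in>UNIV. \<Sum>j\<in>UNIV. \<Sum>k\<in>UNIV. P $ i $ j * M $ j $ k * M $ k $ i)"
    by (simp add: trace_def matrix_matrix_mult_def sum_distrib_left mult.assoc)
  also have "\<dots> = (\<Sum>k\<in>UNIV. \<Sum>i\<in>UNIV. \<Sum>j\<in>UNIV. cnj (M $ i $ k) * P $ i $ j * M $ j $ k)"
    by (subst sum.swap, rule sum.cong[OF refl], subst sum.swap)
      (simp add: hermitian_cnj[OF assms] mult_ac)
  finally show ?thesis
    by (simp add: qform_def column_def)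
qed

lemma Re_trace_mult_square_nonneg:
  assumes "psd P" and "hermitian M"
  shows "0 \<le> Re (trace (P ** (M ** M)))"
  using assms by (simp add: trace_mult_square_eq sum_nonneg psd_iff_qform)

lemma trace_mult_commute: "trace (A ** B) = trace (B ** A)"
  by (simp add: trace_def matrix_matrix_mult_def) (subst sum.swap, simp add: mult.commute)

lemma trace_mult_hermitian_real:
  assumes "hermitian P" and "hermitian Q"
  shows "Im (trace (P ** Q)) = 0"
proof -
  have "cnj (trace (P ** Q)) = trace (Q ** P)"
    by (simp add: trace_def matrix_matrix_mult_def hermitian_cnj[OF assms(1)] hermitian_cnj[OF assms(2)]
        mult.commute)
  also have "\<dots> = trace (P ** Q)"
    by (rule trace_mult_commute)
  finally show ?thesis
    by (simp add: Reals_cnj_iff flip: complex_is_Real_iff)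
qed

lemma square_shift_eq:
  fixes S :: "'a::real_algebra_1 ^ 'n ^ 'n"
  assumes "S ** S = (a * a) *\<^sub>R mat 1"
  shows "(a *\<^sub>R mat 1 - S) ** (a *\<^sub>R mat 1 - S) = (2 * a) *\<^sub>R (a *\<^sub>R mat 1 - S)"
proof -
  let ?M = "a *\<^sub>R mat 1 - S"
  have "S ** ?M = - (a *\<^sub>R ?M)"
    by (simp add: matrix_diff_ldistrib matrix_scalar_ac assms scaleR_diff_right
        flip: scalar_matrix_assoc)
  then have "?M ** ?M = a *\<^sub>R ?M + a *\<^sub>R ?M"
    by (simp add: matrix_diff_rdistrib flip: scalar_matrix_assoc)
  then show ?thesis
    by (simp add: scaleR_add_left[symmetric])
qed

lemma Re_trace_mult_le:
  assumes "psd P" and "hermitian S" and "S ** S = (a * a) *\<^sub>R mat 1" and "0 < a"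
  shows "Re (trace (P ** S)) \<le> a * Re (trace P)"
proof -
  let ?M = "a *\<^sub>R mat 1 - S"
  have "hermitian ?M"
    by (intro hermitian_diff hermitian_scaleR hermitian_mat_1 assms(2))
  with assms(1) have "0 \<le> Re (trace (P ** (?M ** ?M)))"
    by (rule Re_trace_mult_square_nonneg)
  also have "P ** (?M ** ?M) = (2 * a) *\<^sub>R (a *\<^sub>R P - P ** S)"
    unfolding square_shift_eq[OF assms(3)]
    by (simp add: matrix_scalar_ac matrix_diff_ldistrib scaleR_diff_right flip: scalar_matrix_assoc)
  also have "Re (trace \<dots>) = 2 * a * (a * Re (trace P) - Re (trace (P ** S)))"
    by (simp add: trace_diff trace_scaleR)
  finally show ?thesis
    using assms(4) by (simp add: zero_le_mult_iff)
qed

lemma cmod_trace_density_dichotomic_le_1: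
  assumes "density \<rho>" and "dichotomic U"
  shows "cmod (trace (\<rho> ** U)) \<le> 1"
proof -
  have \<rho>: "psd \<rho>" "trace \<rho> = 1"
    using assms(1) by (auto simp: density_def)
  have U: "hermitian U" "U ** U = (1 * 1) *\<^sub>R mat 1"
    using assms(2) by (auto simp: dichotomic_def)
  have hermitian_neg: "hermitian ((-1) *\<^sub>R U)"
    using U(1) by (rule hermitian_scaleR)
  have square_neg: "((-1) *\<^sub>R U) ** ((-1) *\<^sub>R U) = (1 * 1) *\<^sub>R mat 1"
    using U(2) by (simp only: matrix_scalar_ac scaleR_scaleR flip: scalar_matrix_assoc) simp
  have mult_neg: "\<rho> ** ((-1) *\<^sub>R U) = (-1) *\<^sub>R (\<rho> ** U)"
    by (simp only: matrix_scalar_ac flip: scalar_matrix_assoc)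
  have "Re (trace (\<rho> ** U)) \<le> 1"
    using Re_trace_mult_le[OF \<rho>(1) U] \<rho>(2) by simp
  moreover have "- Re (trace (\<rho> ** U)) \<le> 1"
    using Re_trace_mult_le[OF \<rho>(1) hermitian_neg square_neg] \<rho>(2)
    unfolding mult_neg by (simp only: trace_scaleR) simp
  moreover have "Im (trace (\<rho> ** U)) = 0"
    using \<rho>(1) U(1) by (simp add: psd_iff_qform trace_mult_hermitian_real)
  ultimately show ?thesis
    by (simp add: cmod_eq_Re)
qed

lemma kron_dichotomic:
  assumes "dichotomic A" and "dichotomic B"
  shows "dichotomic (kron A B)"
proof -
  have hA: "hermitian A" and hB: "hermitian B" and AA: "A ** A = mat 1" and BB: "B ** B = mat 1"
    using assms by (auto simp: dichotomic_def)
  have "hermitian (kron A B)"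
    by (simp add: hermitian_iff_cnj kron_def hermitian_cnj[OF hA] hermitian_cnj[OF hB])
  moreover have "(kron A B ** kron A B) $ p $ q = mat 1 $ p $ q" for p q
  proof -
    have "(kron A B ** kron A B) $ p $ q
        = (\<Sum>a\<in>UNIV. \<Sum>b\<in>UNIV. A $ fst p $ a * A $ a $ fst q * (B $ snd p $ b * B $ b $ snd q))"
      unfolding matrix_matrix_mult_def kron_def sum.cartesian_product UNIV_Times_UNIV
      by (simp add: case_prod_beta mult_ac)
    also have "\<dots> = (A ** A) $ fst p $ fst q * (B ** B) $ snd p $ snd q"
      by (simp add: matrix_matrix_mult_def sum_product)
    also have "\<dots> = mat 1 $ p $ q"
      by (simp add: AA BB mat_def prod_eq_iff)
    finally show ?thesis .
  qed
  then have "kron A B ** kron A B = mat 1"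
    by (simp add: vec_eq_iff)
  ultimately show ?thesis
    by (simp add: dichotomic_def)
qed

subsection \<open>Joint measurability at unsharpness \<open>1/n\<close>\<close>

definition bool_sign :: "bool \<Rightarrow> real" where
  "bool_sign b = (if b then 1 else -1)"

lemma spec_proj_eq: "spec_proj A b = (1/2) *\<^sub>R (1 *\<^sub>R mat 1 - (- bool_sign b) *\<^sub>R A)"
  by (simp add: spec_proj_def bool_sign_def)

lemma psd_spec_proj:
  assumes "dichotomic A"
  shows "psd (spec_proj A b)"
proof -
  let ?S = "(- bool_sign b) *\<^sub>R A"
  have hermitian_S: "hermitian ?S"
    using assms unfolding dichotomic_def by (blast intro: hermitian_scaleR)
  have "?S ** ?S = (- bool_sign b * - bool_sign b) *\<^sub>R (A ** A)"
    by (simp only: matrix_scalar_ac scaleR_scaleR flip: scalar_matrix_assoc)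
  then have square_S: "?S ** ?S = (1 * 1) *\<^sub>R mat 1"
    using assms by (simp add: dichotomic_def bool_sign_def)
  have "psd (1 *\<^sub>R mat 1 - ?S)"
    by (rule psd_if_square_eq_scaleR[OF hermitian_diff[OF hermitian_scaleR[OF hermitian_mat_1] hermitian_S]
          square_shift_eq[OF square_S]]) simp
  then show ?thesis
    unfolding spec_proj_eq by (rule psd_scaleR) simp
qed

lemma spec_proj_True_add_False: "spec_proj A True + spec_proj A False = mat 1"
  by (simp add: spec_proj_def vec_eq_iff) (simp add: scaleR_conv_of_real field_simps)

lemma unsharp_True_diff_False: "unsharp \<eta> A True - unsharp \<eta> A False = \<eta> *\<^sub>R A"
  by (simp add: unsharp_def spec_proj_def vec_eq_iff) (simp add: scaleR_conv_of_real field_simps)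

lemma sum_bool_sign_eq_marginal_diff:
  fixes G :: "('i::finite \<Rightarrow> bool) \<Rightarrow> 'a::real_vector"
  shows "(\<Sum>f\<in>UNIV. bool_sign (f i) *\<^sub>R G f)
           = (\<Sum>f\<in>{f. f i}. G f) - (\<Sum>f\<in>{f. \<not> f i}. G f)"
proof -
  have "(\<Sum>f\<in>UNIV. bool_sign (f i) *\<^sub>R G f) = (\<Sum>f\<in>UNIV. if f i then G f else - G f)"
    by (rule sum.cong) (simp_all add: bool_sign_def)
  then show ?thesis
    by (simp add: sum.If_cases sum_negf Collect_neg_eq)
qed

lemma sum_bit_symmetric:
  fixes g :: "bool \<Rightarrow> 'a::real_vector" and S :: "('i \<Rightarrow> bool) set"
  assumes "finite S" and flip_closed: "\<And>f. f \<in> S \<Longrightarrow> f(j := \<not> f j) \<in> S"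
  shows "(\<Sum>f\<in>S. g (f j)) = (card S / 2) *\<^sub>R (g True + g False)"
proof -
  have "(\<Sum>f\<in>S. g (f j)) = (\<Sum>f\<in>S. g (\<not> f j))"
    by (rule sum.reindex_bij_witness[where i="\<lambda>f. f(j := \<not> f j)" and j="\<lambda>f. f(j := \<not> f j)"])
      (auto simp: flip_closed)
  then have "2 *\<^sub>R (\<Sum>f\<in>S. g (f j)) = (\<Sum>f\<in>S. g (f j) + g (\<not> f j))"
    by (simp add: scaleR_2 sum.distrib)
  also have "\<dots> = (\<Sum>f\<in>S. g True + g False)"
    by (intro sum.cong refl) (metis (full_types) add.commute)
  also have "\<dots> = real (card S) *\<^sub>R (g True + g False)"
    by (rule sum_constant_scaleR)
  finally have "(1/2) *\<^sub>R (2 *\<^sub>R (\<Sum>f\<in>S. g (f j))) = (1/2) *\<^sub>R (real (card S) *\<^sub>R (g True + g False))"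
    by (rule arg_cong)
  then show ?thesis
    by simp
qed

lemma card_fixed_value:
  "real (card {f :: 'i::finite \<Rightarrow> bool. f i = k}) = CARD('i \<Rightarrow> bool) / 2"
  using sum_bit_symmetric[of UNIV i "\<lambda>b. of_bool (b = k) :: real"] by simp

lemma sum_spec_proj_flip_closed:
  assumes "finite S" and "\<And>f. f \<in> S \<Longrightarrow> f(j := \<not> f j) \<in> S"
  shows "(\<Sum>f\<in>S. spec_proj (A j) (f j)) = (card S / 2) *\<^sub>R mat 1"
  using sum_bit_symmetric[OF assms, of "spec_proj (A j)"] by (simp add: spec_proj_True_add_False)

text \<open>Choose \<open>j\<close> uniformly at random, measure \<open>A j\<close>, and report independent fair coin flips
  as the outcomes of all the other observables.\<close>

definition random_choice_povm :: "('i::finite \<Rightarrow> 'n::finite op) \<Rightarrow> ('i \<Rightarrow> bool) \<Rightarrow> 'n op" where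
  "random_choice_povm A f =
     (2 / (CARD('i) * CARD('i \<Rightarrow> bool))) *\<^sub>R (\<Sum>j\<in>UNIV. spec_proj (A j) (f j))"

lemma psd_random_choice_povm:
  "(\<And>i. dichotomic (A i)) \<Longrightarrow> psd (random_choice_povm A f)"
  unfolding random_choice_povm_def by (intro psd_scaleR psd_sum psd_spec_proj) auto

lemma sum_random_choice_povm:
  fixes A :: "'i::finite \<Rightarrow> 'n::finite op"
  shows "(\<Sum>f\<in>UNIV. random_choice_povm A f) = mat 1"
proof -
  define c where "c = 2 / (CARD('i) * CARD('i \<Rightarrow> bool))"
  have "(\<Sum>f\<in>UNIV. random_choice_povm A f) = c *\<^sub>R (\<Sum>f\<in>UNIV. \<Sum>j\<in>UNIV. spec_proj (A j) (f j))"
    by (simp add: random_choice_povm_def c_def flip: scaleR_sum_right)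
  also have "\<dots> = c *\<^sub>R (\<Sum>j\<in>UNIV. \<Sum>f\<in>UNIV. spec_proj (A j) (f j))"
    by (subst sum.swap) (rule refl)
  also have "\<dots> = c *\<^sub>R (\<Sum>j\<in>(UNIV :: 'i set). (CARD('i \<Rightarrow> bool) / 2) *\<^sub>R mat 1)"
    by (simp add: sum_spec_proj_flip_closed)
  also have "\<dots> = (c * (CARD('i) * (CARD('i \<Rightarrow> bool) / 2))) *\<^sub>R mat 1"
    by (simp only: sum_constant_scaleR scaleR_scaleR)
  finally show ?thesis
    by (simp add: c_def)
qed

lemma marginal_random_choice_povm:
  fixes A :: "'i::finite \<Rightarrow> 'n::finite op"
  shows "(\<Sum>f\<in>{f. f i = k}. random_choice_povm A f) = unsharp (1 / CARD('i)) (A i) k"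
proof -
  define n where "n = real CARD('i)"
  define N where "N = real CARD('i \<Rightarrow> bool)"
  let ?S = "{f :: 'i \<Rightarrow> bool. f i = k}"
  have "0 < n" "0 < N"
    by (simp_all add: n_def N_def)
  have card_S: "real (card ?S) = N / 2"
    by (simp add: card_fixed_value N_def)
  have "(\<Sum>f\<in>?S. spec_proj (A j) (f j)) = (N / 4) *\<^sub>R mat 1" if "j \<noteq> i" for j
    using sum_spec_proj_flip_closed[of ?S j] that card_S by simp
  then have "(\<Sum>j\<in>UNIV - {i}. \<Sum>f\<in>?S. spec_proj (A j) (f j)) = (\<Sum>j\<in>UNIV - {i}. (N / 4) *\<^sub>R mat 1)"
    by (intro sum.cong) auto
  also have "\<dots> = (real (card (UNIV - {i})) * (N / 4)) *\<^sub>R mat 1"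
    by (simp only: sum_constant_scaleR scaleR_scaleR)
  also have "real (card (UNIV - {i})) = n - 1"
    by (simp add: n_def card_Diff_singleton Suc_le_eq)
  finally have others: "(\<Sum>j\<in>UNIV - {i}. \<Sum>f\<in>?S. spec_proj (A j) (f j)) = ((n - 1) * (N / 4)) *\<^sub>R mat 1" .
  have "(\<Sum>f\<in>?S. spec_proj (A i) (f i)) = (\<Sum>f\<in>?S. spec_proj (A i) k)"
    by (intro sum.cong) auto
  then have chosen: "(\<Sum>f\<in>?S. spec_proj (A i) (f i)) = (N / 2) *\<^sub>R spec_proj (A i) k"
    by (simp only: sum_constant_scaleR card_S)
  have "(\<Sum>f\<in>?S. random_choice_povm A f)
      = (2 / (n * N)) *\<^sub>R (\<Sum>f\<in>?S. \<Sum>j\<in>UNIV. spec_proj (A j) (f j))"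
    by (simp add: random_choice_povm_def n_def N_def flip: scaleR_sum_right)
  also have "\<dots> = (2 / (n * N)) *\<^sub>R (\<Sum>j\<in>UNIV. \<Sum>f\<in>?S. spec_proj (A j) (f j))"
    by (subst sum.swap) (rule refl)
  also have "\<dots> = (2 / (n * N)) *\<^sub>R ((N / 2) *\<^sub>R spec_proj (A i) k + ((n - 1) * (N / 4)) *\<^sub>R mat 1)"
    using chosen others by (simp add: sum.remove[of UNIV i])
  also have "\<dots> = unsharp (1 / n) (A i) k"
    using \<open>0 < n\<close> \<open>0 < N\<close> by (simp add: unsharp_def scaleR_add_right field_simps)
  finally show ?thesis
    by (simp add: n_def)
qed

lemma jointly_measurable_unsharp_inverse_card:
  fixes A :: "'i::finite \<Rightarrow> 'n::finite op"
  assumes "\<forall>i. dichotomic (A i)"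
  shows "jointly_measurable (\<lambda>i. unsharp (1 / CARD('i)) (A i))"
  unfolding jointly_measurable_def povm_def
  using assms psd_random_choice_povm sum_random_choice_povm marginal_random_choice_povm by blast

subsection \<open>Unsharp Pauli observables\<close>

definition pauli :: "3 \<Rightarrow> 2 op" where
  "pauli k =
     (if k = 1 then (\<chi> i j. if i = j then 0 else 1)
      else if k = 2 then (\<chi> i j. if i = j then 0 else if i = 1 then - \<i> else \<i>)
      else (\<chi> i j. if i = j then (if i = 1 then 1 else -1) else 0))"

lemma pauli_dichotomic: "dichotomic (pauli k)"
  using exhaust_3[of k]
  by (auto simp: dichotomic_def hermitian_def pauli_def vec_eq_iff forall_2 sum_2
      matrix_matrix_mult_def mat_def)

lemma pauli_combination_square:
  fixes s :: "3 \<Rightarrow> real"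
  shows "(\<Sum>i\<in>UNIV. s i *\<^sub>R pauli i) ** (\<Sum>i\<in>UNIV. s i *\<^sub>R pauli i) = (\<Sum>i\<in>UNIV. (s i)\<^sup>2) *\<^sub>R mat 1"
  by (simp add: sum_3 pauli_def vec_eq_iff forall_2 sum_2 matrix_matrix_mult_def mat_def)
    (simp add: scaleR_conv_of_real algebra_simps power2_eq_square)

lemma bool_sign_square: "(bool_sign b)\<^sup>2 = 1"
  by (simp add: bool_sign_def)

lemma trace_pauli_square: "trace (pauli k ** pauli k) = 2"
  using pauli_dichotomic[of k] by (simp add: dichotomic_def trace_mat_1)

definition signed_pauli_sum :: "(3 \<Rightarrow> bool) \<Rightarrow> 2 op" where
  "signed_pauli_sum f = (\<Sum>i\<in>UNIV. bool_sign (f i) *\<^sub>R pauli i)"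

lemma hermitian_signed_pauli_sum: "hermitian (signed_pauli_sum f)"
  unfolding signed_pauli_sum_def using pauli_dichotomic
  by (intro hermitian_sum hermitian_scaleR) (simp add: dichotomic_def)

lemma signed_pauli_sum_square: "signed_pauli_sum f ** signed_pauli_sum f = (sqrt 3 * sqrt 3) *\<^sub>R mat 1"
  unfolding signed_pauli_sum_def pauli_combination_square by (simp add: bool_sign_square)

lemma sum_trace_mult_signed_pauli_sum:
  assumes "\<And>i. (\<Sum>f\<in>UNIV. bool_sign (f i) *\<^sub>R G f) = \<eta> *\<^sub>R pauli i"
  shows "(\<Sum>f\<in>UNIV. trace (G f ** signed_pauli_sum f)) = of_real (6 * \<eta>)"
proof -
  have "(\<Sum>f\<in>UNIV. trace (G f ** signed_pauli_sum f))
      = (\<Sum>f\<in>UNIV. \<Sum>i\<in>UNIV. of_real (bool_sign (f i)) * trace (G f ** pauli i))"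
    by (simp add: signed_pauli_sum_def matrix_sum_ldistrib trace_sum matrix_scalar_ac trace_scaleR
        flip: scalar_matrix_assoc)
  also have "\<dots> = (\<Sum>i\<in>UNIV. \<Sum>f\<in>UNIV. of_real (bool_sign (f i)) * trace (G f ** pauli i))"
    by (rule sum.swap)
  also have "\<dots> = (\<Sum>i\<in>UNIV. trace ((\<Sum>f\<in>UNIV. bool_sign (f i) *\<^sub>R G f) ** pauli i))"
    by (simp add: matrix_sum_rdistrib trace_sum trace_scaleR flip: scalar_matrix_assoc)
  also have "\<dots> = of_real (6 * \<eta>)"
    by (simp add: assms trace_scaleR trace_pauli_square flip: scalar_matrix_assoc)
  finally show ?thesis .
qed

lemma unsharp_paulis_jointly_measurable_imp_le:
  assumes "jointly_measurable (\<lambda>i. unsharp \<eta> (pauli i))"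
  shows "\<eta> \<le> 1 / sqrt 3"
proof -
  obtain G :: "(3 \<Rightarrow> bool) \<Rightarrow> 2 op" where "povm G"
    and marginal: "\<And>i k. (\<Sum>f\<in>{f. f i = k}. G f) = unsharp \<eta> (pauli i) k"
    using assms unfolding jointly_measurable_def by blast
  then have psd_G: "\<And>f. psd (G f)" and sum_G: "(\<Sum>f\<in>UNIV. G f) = mat 1"
    by (auto simp: povm_def)
  have "(\<Sum>f\<in>UNIV. bool_sign (f i) *\<^sub>R G f) = \<eta> *\<^sub>R pauli i" for i
    using marginal[of i True] marginal[of i False]
    by (simp add: sum_bool_sign_eq_marginal_diff unsharp_True_diff_False)
  then have "(\<Sum>f\<in>UNIV. trace (G f ** signed_pauli_sum f)) = of_real (6 * \<eta>)"
    by (rule sum_trace_mult_signed_pauli_sum)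
  then have "6 * \<eta> = (\<Sum>f\<in>UNIV. Re (trace (G f ** signed_pauli_sum f)))"
    by (simp flip: Re_sum)
  also have "\<dots> \<le> (\<Sum>f\<in>UNIV. sqrt 3 * Re (trace (G f)))"
    by (intro sum_mono Re_trace_mult_le psd_G hermitian_signed_pauli_sum signed_pauli_sum_square) simp
  also have "\<dots> = sqrt 3 * Re (trace (\<Sum>f\<in>UNIV. G f))"
    by (simp add: sum_distrib_left trace_sum)
  also have "\<dots> = 2 * sqrt 3"
    by (simp add: sum_G trace_mat_1)
  finally have "3 * \<eta> \<le> sqrt 3"
    by simp
  moreover have "(\<eta> * sqrt 3) * sqrt 3 = 3 * \<eta>"
    by (simp add: mult.assoc)
  ultimately have "(\<eta> * sqrt 3) * sqrt 3 \<le> 1 * sqrt 3"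
    by linarith
  then have "\<eta> * sqrt 3 \<le> 1"
    by (rule mult_right_le_imp_le) simp
  then show ?thesis
    by (simp add: pos_le_divide_eq)
qed

definition compatible_unsharpness :: "real set" where
  "compatible_unsharpness = {\<eta> \<in> {0..1}. \<forall>A :: 3 \<Rightarrow> 2 op. (\<forall>i. dichotomic (A i)) \<longrightarrow>
                                jointly_measurable (\<lambda>i. unsharp \<eta> (A i))}"

lemma one_third_mem_compatible_unsharpness: "1/3 \<in> compatible_unsharpness"
  using jointly_measurable_unsharp_inverse_card[where 'i = 3 and 'n = 2]
  by (simp add: compatible_unsharpness_def)

lemma compatible_unsharpness_le: "\<eta> \<in> compatible_unsharpness \<Longrightarrow> \<eta> \<le> 1 / sqrt 3"
  using pauli_dichotomic
  by (auto simp: compatible_unsharpness_def intro: unsharp_paulis_jointly_measurable_imp_le)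

lemma eta_opt_ge_one_third: "1/3 \<le> eta_opt"
  unfolding eta_opt_def compatible_unsharpness_def[symmetric]
  by (rule cSup_upper[OF one_third_mem_compatible_unsharpness])
    (auto simp: bdd_above_def compatible_unsharpness_def)

lemma eta_opt_le_inverse_sqrt_3: "eta_opt \<le> 1 / sqrt 3"
  unfolding eta_opt_def compatible_unsharpness_def[symmetric]
  using one_third_mem_compatible_unsharpness
  by (intro cSup_least compatible_unsharpness_le) auto

theorem theorem3:
  fixes \<rho> :: "(2 \<times> 2) op" and A B :: "3 \<Rightarrow> 2 op"
  assumes "density \<rho>"
    and "\<forall>i. dichotomic (A i)" and "\<forall>i. dichotomic (B i)"
  shows "(1 / sqrt 3) * cmod (\<Sum>i\<in>UNIV. trace (\<rho> ** kron (A i) (B i))) \<le> 1 / eta_opt"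
proof -
  have "cmod (\<Sum>i\<in>UNIV. trace (\<rho> ** kron (A i) (B i))) \<le> (\<Sum>i\<in>UNIV. cmod (trace (\<rho> ** kron (A i) (B i))))"
    by (rule norm_sum)
  also have "\<dots> \<le> (\<Sum>i\<in>(UNIV :: 3 set). 1)"
    using assms by (intro sum_mono cmod_trace_density_dichotomic_le_1 kron_dichotomic) auto
  finally have "(1 / sqrt 3) * cmod (\<Sum>i\<in>UNIV. trace (\<rho> ** kron (A i) (B i))) \<le> 3 / sqrt 3"
    by (simp add: divide_right_mono)
  also have "3 / sqrt 3 = inverse (1 / sqrt 3)"
    by (simp add: real_div_sqrt)
  also have "\<dots> \<le> inverse eta_opt"
    using eta_opt_le_inverse_sqrt_3 eta_opt_ge_one_third by (intro le_imp_inverse_le) auto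
  finally show ?thesis
    by (simp add: inverse_eq_divide)
qed

end
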